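(* Let $S$ be a nonempty compact (not necessarily convex) set in the plane and fix $0<\alpha<\pi$. Then there exist a point $O$ and two rays $q,r$ emanating from $O$ forming an angle $\alpha$ such that $S$ is contained in the closed convex wedge bounded by $q$ and $r$, $q$ meets the convex hull of $S$ in exactly one point $X$, $r$ meets the convex hull of $S$ in exactly one point $Y$, $X,Y\in S$, and $|OX|=|OY|$. *)

theory Defs
  imports "HOL-Analysis.Analysis"
begin

definition ray :: "real^2 \<Rightarrow> real^2 \<Rightarrow> (real^2) set" where
  "ray P u = {P + t *\<^sub>R u | t. t \<ge> 0}"

definition vec_angle :: "real^2 \<Rightarrow> real^2 \<Rightarrow> real" where
  "vec_angle u v = arccos ((u \<bullet> v) / (norm u * norm v))"

text \<open>The closed wedge bounded by the rays from P in directions u and v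
  (for an angle less than pi this is the closed convex region between them).\<close>
definition wedge :: "real^2 \<Rightarrow> real^2 \<Rightarrow> real^2 \<Rightarrow> (real^2) set" where
  "wedge P u v = {P + a *\<^sub>R u + b *\<^sub>R v | a b. a \<ge> 0 \<and> b \<ge> 0}"

end

theory Submission
  imports Defs
begin

(* Identify a direction with its angle phi and let  along phi z = <(cos phi, sin phi), z>  be the
   height of z in that direction and  across phi z  the coordinate along the rotated direction.
   A wedge of opening alpha containing S is bounded by two supporting lines whose normal
   directions a = theta + gamma and b = theta - gamma differ by 2 gamma = pi - alpha; the task is
   to choose theta so that both lines touch S in a single point and the two touching points are
   equally far from the apex.

   With F an antiderivative of min_along S, the "wedge potential"
   sin gamma (h(theta+gamma) + h(theta-gamma)) - cos gamma (F(theta+gamma) - F(theta-gamma))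
   is continuous and 2 pi-periodic, so it has a global minimiser.  At a minimiser every pair of
   touching points p, q satisfies the balance equation
   (across a p + across b q) sin gamma = (min_along S a - min_along S b) cos gamma.
   This pins down across a p and across b q, so the touching points are unique, and a rotation
   identity turns the same equation into equality of the two apex distances.  Finally a point
   exposed by a linear functional is the only point of the convex hull on the supporting line,
   which yields the statement about the rays. *)

definition along :: "real \<Rightarrow> real^2 \<Rightarrow> real" where
  "along \<phi> z = cos \<phi> * z$1 + sin \<phi> * z$2"

definition across :: "real \<Rightarrow> real^2 \<Rightarrow> real" where
  "across \<phi> z = - sin \<phi> * z$1 + cos \<phi> * z$2"

definition min_along :: "(real^2) set \<Rightarrow> real \<Rightarrow> real" where
  "min_along S \<phi> = Inf (along \<phi> ` S)"

lemma linear_along: "linear (along \<phi>)"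
  by (rule linearI) (simp_all add: along_def algebra_simps)

lemma along_add: "along \<phi> (x + y) = along \<phi> x + along \<phi> y"
  and along_diff: "along \<phi> (x - y) = along \<phi> x - along \<phi> y"
  and along_scale: "along \<phi> (c *\<^sub>R x) = c * along \<phi> x"
  by (simp_all add: linear_add linear_diff linear_scale linear_along)

lemma along_rotate: "along (\<phi> + \<delta>) z = cos \<delta> * along \<phi> z + sin \<delta> * across \<phi> z"
  unfolding along_def across_def by (simp add: cos_add sin_add algebra_simps)

lemma along_derivative: "((\<lambda>\<phi>. along \<phi> z) has_real_derivative across \<phi> z) (at \<phi>)"
  unfolding along_def across_def by (auto intro!: derivative_eq_intros)

lemma along_across_eqI:
  assumes "along \<phi> w = along \<phi> w'" "across \<phi> w = across \<phi> w'"
  shows "w = w'"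
proof -
  have coords: "z$1 = cos \<phi> * along \<phi> z - sin \<phi> * across \<phi> z"
    "z$2 = sin \<phi> * along \<phi> z + cos \<phi> * across \<phi> z" for z :: "real^2"
  proof -
    have unit: "cos \<phi> * (cos \<phi> * x) + sin \<phi> * (sin \<phi> * x) = x" for x :: real
      by (simp only: mult.assoc[symmetric] distrib_right[symmetric]) simp
    show "z$1 = cos \<phi> * along \<phi> z - sin \<phi> * across \<phi> z"
      "z$2 = sin \<phi> * along \<phi> z + cos \<phi> * across \<phi> z"
      unfolding along_def across_def by (simp_all add: algebra_simps unit)
  qed
  show ?thesis using assms coords[of w] coords[of w'] by (simp add: vec_eq_iff forall_2)
qed

lemma along_pair_eqI:
  assumes "sin (a - b) \<noteq> 0" "along a w = along a w'" "along b w = along b w'"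
  shows "w = w'"
proof -
  have coords: "sin (a - b) * z$1 = along b z * sin a - along a z * sin b"
    "sin (a - b) * z$2 = along a z * cos b - along b z * cos a" for z :: "real^2"
    unfolding along_def by (simp_all add: sin_diff algebra_simps)
  have "sin (a - b) * w$1 = sin (a - b) * w'$1" "sin (a - b) * w$2 = sin (a - b) * w'$2"
    using assms(2,3) coords[of w] coords[of w'] by simp_all
  then have "w$1 = w'$1" "w$2 = w'$2" using assms(1) by simp_all
  then show ?thesis by (simp add: vec_eq_iff forall_2)
qed

lemma continuous_on_along: "continuous_on S (along \<phi>)"
  unfolding along_def by (intro continuous_intros)

lemma compact_Inf_image_le:
  fixes f :: "'a::topological_space \<Rightarrow> real"
  assumes "compact S" "continuous_on S f" "z \<in> S"
  shows "Inf (f ` S) \<le> f z"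
proof -
  have "bdd_below (f ` S)"
    using compact_continuous_image[OF assms(2,1)] by (meson bounded_imp_bdd_below compact_imp_bounded)
  then show ?thesis using assms(3) by (simp add: cInf_lower)
qed

lemma compact_Inf_image_attained:
  fixes f :: "'a::topological_space \<Rightarrow> real"
  assumes "compact S" "S \<noteq> {}" "continuous_on S f"
  obtains z where "z \<in> S" "f z = Inf (f ` S)"
proof -
  obtain z where z: "z \<in> S" "\<forall>y\<in>S. f z \<le> f y"
    using continuous_attains_inf[OF assms] by blast
  have "Inf (f ` S) = f z" by (rule cInf_eq_minimum) (use z in auto)
  then show ?thesis using that z(1) by simp
qed

lemma min_along_le: "compact S \<Longrightarrow> z \<in> S \<Longrightarrow> min_along S \<phi> \<le> along \<phi> z"
  unfolding min_along_def by (rule compact_Inf_image_le[OF _ continuous_on_along])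

lemma min_along_attained:
  assumes "compact S" "S \<noteq> {}" obtains z where "z \<in> S" "along \<phi> z = min_along S \<phi>"
  using compact_Inf_image_attained[OF assms continuous_on_along] unfolding min_along_def by blast

lemma Inf_image_close:
  fixes f g :: "'a::topological_space \<Rightarrow> real"
  assumes "compact S" "S \<noteq> {}" "continuous_on S f" "continuous_on S g"
    and close: "\<And>z. z \<in> S \<Longrightarrow> \<bar>f z - g z\<bar> \<le> e"
  shows "\<bar>Inf (f ` S) - Inf (g ` S)\<bar> \<le> e"
proof -
  obtain x where x: "x \<in> S" "f x = Inf (f ` S)"
    using compact_Inf_image_attained[OF assms(1,2,3)] .
  obtain y where y: "y \<in> S" "g y = Inf (g ` S)"
    using compact_Inf_image_attained[OF assms(1,2,4)] .
  have "Inf (f ` S) \<le> f y" "Inf (g ` S) \<le> g x"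
    using compact_Inf_image_le[OF assms(1)] assms(3,4) x(1) y(1) by auto
  then show ?thesis using x y close[of x] close[of y] by linarith
qed

lemma isCont_min_along:
  assumes "compact S" "S \<noteq> {}" shows "isCont (min_along S) \<psi>"
proof -
  obtain R where R: "\<And>z. z \<in> S \<Longrightarrow> norm z \<le> R"
    using compact_imp_bounded[OF assms(1)] by (auto simp: bounded_iff)
  define e where "e \<phi> = R * (\<bar>cos \<phi> - cos \<psi>\<bar> + \<bar>sin \<phi> - sin \<psi>\<bar>)" for \<phi>
  have close: "\<bar>along \<phi> z - along \<psi> z\<bar> \<le> e \<phi>" if "z \<in> S" for \<phi> z
  proof -
    have "\<bar>z$i\<bar> \<le> R" for i using R[OF that] component_le_norm_cart order_trans by blast
    then have "\<bar>(cos \<phi> - cos \<psi>) * z$1\<bar> \<le> R * \<bar>cos \<phi> - cos \<psi>\<bar>"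
      "\<bar>(sin \<phi> - sin \<psi>) * z$2\<bar> \<le> R * \<bar>sin \<phi> - sin \<psi>\<bar>"
      by (simp_all add: abs_mult mult.commute[of R] mult_left_mono)
    moreover have "along \<phi> z - along \<psi> z = (cos \<phi> - cos \<psi>) * z$1 + (sin \<phi> - sin \<psi>) * z$2"
      unfolding along_def by (simp add: algebra_simps)
    ultimately show ?thesis unfolding e_def distrib_left by linarith
  qed
  have bound: "\<bar>min_along S \<phi> - min_along S \<psi>\<bar> \<le> e \<phi>" for \<phi>
    unfolding min_along_def
    by (rule Inf_image_close[OF assms continuous_on_along continuous_on_along close])
  have "isCont e \<psi>" unfolding e_def by (auto intro!: continuous_intros)
  then have "(e \<longlongrightarrow> 0) (at \<psi>)" unfolding isCont_def by (simp add: e_def)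
  then have "((\<lambda>\<phi>. min_along S \<phi> - min_along S \<psi>) \<longlongrightarrow> 0) (at \<psi>)"
    by (rule Lim_null_comparison[rotated]) (simp add: bound)
  then show ?thesis unfolding isCont_def by (rule LIM_zero_cancel)
qed

lemma min_along_periodic: "min_along S (\<phi> + 2 * pi) = min_along S \<phi>"
  unfolding min_along_def along_def by simp

lemma continuous_has_antiderivative:
  fixes g :: "real \<Rightarrow> real"
  assumes "\<And>x. isCont g x"
  obtains F where "\<And>x. (F has_real_derivative g x) (at x)"
proof -
  have "\<exists>F. \<forall>x::real. -\<infinity> < ereal x \<longrightarrow> ereal x < \<infinity> \<longrightarrow> (F has_vector_derivative g x) (at x)"
    by (rule einterval_antiderivative) (use assms in auto)
  then show ?thesis using that by (auto simp: has_real_derivative_iff_has_vector_derivative)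
qed

lemma antiderivative_period_increment:
  fixes F g :: "real \<Rightarrow> real"
  assumes F: "\<And>x. (F has_real_derivative g x) (at x)" and g: "\<And>x. g (x + T) = g x"
  shows "F (x + T) - F x = F (y + T) - F y"
proof -
  have "((\<lambda>x. F (x + T) - F x) has_real_derivative 0) (at t)" for t
  proof -
    have "((\<lambda>x. F (x + T)) has_real_derivative g (t + T)) (at t)"
      using DERIV_shift[of F "g (t + T)" t T] F by simp
    then show ?thesis using DERIV_diff[OF _ F[of t]] g[of t] by fastforce
  qed
  then show ?thesis using DERIV_isconst_all[of "\<lambda>x. F (x + T) - F x" x y] by simp
qed

lemma periodic_attains_min:
  fixes f :: "real \<Rightarrow> real"
  assumes cont: "\<And>x. isCont f x" and "0 < T" and per: "\<And>x. f (x + T) = f x"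
  obtains x0 where "\<And>y. f x0 \<le> f y"
proof -
  have shift: "f (x + real n * T) = f x" for x n
  proof (induction n)
    case (Suc n)
    have "x + real (Suc n) * T = (x + real n * T) + T" by (simp add: algebra_simps)
    then show ?case using Suc.IH per[of "x + real n * T"] by (simp only:)
  qed simp
  have reduce: "\<exists>z\<in>{0..T}. f y = f z" for y
  proof -
    define k where "k = \<lfloor>y / T\<rfloor>"
    define z where "z = y - of_int k * T"
    have z: "z \<in> {0..T}"
      using \<open>0 < T\<close> floor_divide_lower[of T y] floor_divide_upper[of T y]
      by (auto simp: z_def k_def algebra_simps)
    have "f y = f z"
    proof (cases "k \<ge> 0")
      case True
      then have "y = z + real (nat k) * T" by (simp add: z_def)
      then show ?thesis using shift by simp
    next
      case False
      then have "z = y + real (nat (- k)) * T" by (simp add: z_def)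
      then show ?thesis using shift by simp
    qed
    then show ?thesis using z by blast
  qed
  have "continuous_on {0..T} f" by (simp add: continuous_at_imp_continuous_on cont)
  then have "\<exists>x0\<in>{0..T}. \<forall>z\<in>{0..T}. f x0 \<le> f z"
    by (intro continuous_attains_inf compact_Icc) (use \<open>0 < T\<close> in simp_all)
  then obtain x0 where x0: "x0 \<in> {0..T}" "\<forall>z\<in>{0..T}. f x0 \<le> f z" by blast
  show ?thesis
  proof (rule that)
    fix y
    obtain z where "z \<in> {0..T}" "f y = f z" using reduce by blast
    then show "f x0 \<le> f y" using x0(2) by simp
  qed
qed

text \<open>If \<open>f \<le> g\<close> everywhere and \<open>g\<close> touches \<open>f\<close> at a global minimum of \<open>f\<close>, then
  that point is a global minimum of \<open>g\<close>, so the derivative of \<open>g\<close> vanishes there.\<close>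
lemma derivative_zero_at_touching_min:
  fixes f g :: "real \<Rightarrow> real"
  assumes "\<And>y. f x \<le> f y" "\<And>y. f y \<le> g y" "f x = g x"
    and "(g has_real_derivative D) (at x)"
  shows "D = 0"
proof (rule DERIV_local_min[OF assms(4) zero_less_one])
  show "\<forall>y. \<bar>x - y\<bar> < 1 \<longrightarrow> g x \<le> g y" using assms(1-3) by (metis order_trans)
qed

text \<open>The potential whose minimisers are the balanced wedge directions: \<open>F\<close> is meant to be an
  antiderivative of \<open>min_along S\<close>, and the wedge of half-opening \<open>\<gamma>\<close> around the direction \<open>t\<close>
  has supporting lines in the normal directions \<open>t + \<gamma>\<close> and \<open>t - \<gamma>\<close>.\<close>
definition wedge_potential :: "(real^2) set \<Rightarrow> (real \<Rightarrow> real) \<Rightarrow> real \<Rightarrow> real \<Rightarrow> real" where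
  "wedge_potential S F \<gamma> t =
     sin \<gamma> * (min_along S (t + \<gamma>) + min_along S (t - \<gamma>)) - cos \<gamma> * (F (t + \<gamma>) - F (t - \<gamma>))"

text \<open>The potential is continuous and \<open>2\<pi>\<close>-periodic, hence has a global minimiser.\<close>
lemma wedge_potential_attains_min:
  assumes S: "compact S" "S \<noteq> {}" and F: "\<And>x. (F has_real_derivative min_along S x) (at x)"
  obtains \<theta> where "\<And>t. wedge_potential S F \<gamma> \<theta> \<le> wedge_potential S F \<gamma> t"
proof -
  let ?h = "min_along S"
  have h_cont: "isCont ?h x" for x by (rule isCont_min_along[OF S])
  have F_cont: "isCont F x" for x using F DERIV_isCont by blast
  have shifted_cont: "isCont (\<lambda>t. ?h (t + c)) t" "isCont (\<lambda>t. ?h (t - c)) t"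
    "isCont (\<lambda>t. F (t + c)) t" "isCont (\<lambda>t. F (t - c)) t" for c t
    by (intro isCont_o2[OF _ h_cont] isCont_o2[OF _ F_cont] continuous_intros)+
  have "isCont (wedge_potential S F \<gamma>) t" for t
    unfolding wedge_potential_def by (intro continuous_intros shifted_cont)
  moreover have "wedge_potential S F \<gamma> (t + 2 * pi) = wedge_potential S F \<gamma> t" for t
  proof -
    have "F (t + 2 * pi + \<gamma>) - F (t + 2 * pi - \<gamma>) = F (t + \<gamma>) - F (t - \<gamma>)"
      using antiderivative_period_increment[OF F min_along_periodic, of "t + \<gamma>" "t - \<gamma>"]
      by (simp add: algebra_simps)
    moreover have "?h (t + 2 * pi + \<gamma>) = ?h (t + \<gamma>)" "?h (t + 2 * pi - \<gamma>) = ?h (t - \<gamma>)"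
      using min_along_periodic[of S "t + \<gamma>"] min_along_periodic[of S "t - \<gamma>"]
      by (simp_all add: algebra_simps)
    ultimately show ?thesis unfolding wedge_potential_def by simp
  qed
  ultimately show ?thesis using periodic_attains_min[of "wedge_potential S F \<gamma>" "2 * pi"] that by auto
qed

text \<open>At a minimiser \<open>\<theta>\<close> of the potential, replacing the minimal heights by the heights of the
  fixed points \<open>p, q\<close> gives a function \<open>G\<close> above the potential and touching it at \<open>\<theta>\<close>;
  the balance equation is \<open>G'(\<theta>) = 0\<close>.\<close>
lemma balancing_direction:
  assumes S: "compact S" "S \<noteq> {}" and \<gamma>: "0 < \<gamma>" "\<gamma> < pi / 2"
  obtains a b where "a - b = 2 * \<gamma>" and "\<And>p q. p \<in> S \<Longrightarrow> q \<in> S \<Longrightarrow>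
      along a p = min_along S a \<Longrightarrow> along b q = min_along S b \<Longrightarrow>
      (across a p + across b q) * sin \<gamma> = (min_along S a - min_along S b) * cos \<gamma>"
proof -
  let ?h = "min_along S"
  obtain F where F: "\<And>x. (F has_real_derivative ?h x) (at x)"
    using continuous_has_antiderivative[OF isCont_min_along[OF S]] by blast
  obtain \<theta> where \<theta>: "\<And>t. wedge_potential S F \<gamma> \<theta> \<le> wedge_potential S F \<gamma> t"
    using wedge_potential_attains_min[OF S F] by blast
  have shifted_deriv:
    "(f has_real_derivative D) (at (x + c)) \<Longrightarrow> ((\<lambda>t. f (t + c)) has_real_derivative D) (at x)"
    "(f has_real_derivative D) (at (x - c)) \<Longrightarrow> ((\<lambda>t. f (t - c)) has_real_derivative D) (at x)"
    for f :: "real \<Rightarrow> real" and c x D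
    using DERIV_shift[of f D x c] DERIV_shift[of f D x "- c"] by simp_all
  have sin_pos: "0 < sin \<gamma>" using \<gamma> by (simp add: sin_gt_zero)
  show ?thesis
  proof (rule that[of "\<theta> + \<gamma>" "\<theta> - \<gamma>"])
    show "\<theta> + \<gamma> - (\<theta> - \<gamma>) = 2 * \<gamma>" by simp
    fix p q assume p: "p \<in> S" and q: "q \<in> S"
      and p_contact: "along (\<theta> + \<gamma>) p = ?h (\<theta> + \<gamma>)" and q_contact: "along (\<theta> - \<gamma>) q = ?h (\<theta> - \<gamma>)"
    define G where
      "G t = sin \<gamma> * (along (t + \<gamma>) p + along (t - \<gamma>) q) - cos \<gamma> * (F (t + \<gamma>) - F (t - \<gamma>))" for t
    have "wedge_potential S F \<gamma> t \<le> G t" for t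
      using min_along_le[OF S(1) p, of "t + \<gamma>"] min_along_le[OF S(1) q, of "t - \<gamma>"] sin_pos
      unfolding wedge_potential_def G_def by (simp add: mult_left_mono add_mono)
    moreover have "wedge_potential S F \<gamma> \<theta> = G \<theta>"
      unfolding wedge_potential_def G_def using p_contact q_contact by simp
    moreover have "(G has_real_derivative sin \<gamma> * (across (\<theta> + \<gamma>) p + across (\<theta> - \<gamma>) q)
        - cos \<gamma> * (?h (\<theta> + \<gamma>) - ?h (\<theta> - \<gamma>))) (at \<theta>)"
      unfolding G_def by (intro DERIV_diff DERIV_cmult DERIV_add shifted_deriv along_derivative F)
    ultimately have "sin \<gamma> * (across (\<theta> + \<gamma>) p + across (\<theta> - \<gamma>) q)
        - cos \<gamma> * (?h (\<theta> + \<gamma>) - ?h (\<theta> - \<gamma>)) = 0"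
      by (rule derivative_zero_at_touching_min[of "wedge_potential S F \<gamma>" \<theta> G, OF \<theta>])
    then show "(across (\<theta> + \<gamma>) p + across (\<theta> - \<gamma>) q) * sin \<gamma> = (?h (\<theta> + \<gamma>) - ?h (\<theta> - \<gamma>)) * cos \<gamma>"
      by (simp add: algebra_simps)
  qed
qed

text \<open>A point of \<open>S\<close> exposed by a linear functional is the only point of the convex hull of \<open>S\<close>
  on the corresponding supporting hyperplane: the rest of \<open>S\<close> lies in an open half-space.\<close>
lemma convex_hull_exposed_point:
  fixes f :: "'a::real_vector \<Rightarrow> real"
  assumes "linear f" and above: "\<And>z. z \<in> S \<Longrightarrow> c \<le> f z" and X: "X \<in> S" "f X = c"
    and unique: "\<And>z. z \<in> S \<Longrightarrow> f z = c \<Longrightarrow> z = X"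
  shows "{z \<in> convex hull S. f z = c} = {X}"
proof -
  have "z = X" if z: "z \<in> convex hull S" "f z = c" for z
  proof (cases "S - {X} = {}")
    case True
    then have "S = {X}" using X(1) by blast
    then show ?thesis using z(1) by simp
  next
    case False
    have "S - {X} \<subseteq> {y. c < f y}" using above unique by force
    moreover have "convex {y. c < f y}"
      using convex_linear_vimage[OF \<open>linear f\<close> convex_real_interval(3)[of c]] by (simp add: vimage_def)
    ultimately have strict: "convex hull (S - {X}) \<subseteq> {y. c < f y}" by (rule hull_minimal)
    have "S = insert X (S - {X})" using X(1) by blast
    then have "z \<in> convex hull (insert X (S - {X}))" using z(1) by simp
    then obtain u v b where uv: "0 \<le> u" "0 \<le> v" "u + v = 1"
      and b: "b \<in> convex hull (S - {X})" and z_eq: "z = u *\<^sub>R X + v *\<^sub>R b"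
      unfolding convex_hull_insert[OF False] by blast
    have "c = u * c + v * f b"
      using z(2) X(2) linear_add[OF \<open>linear f\<close>] linear_scale[OF \<open>linear f\<close>] by (simp add: z_eq)
    have "v * (f b - c) = (u * c + v * f b) - (u + v) * c" by (simp add: algebra_simps)
    also have "\<dots> = 0" using \<open>c = u * c + v * f b\<close> uv(3) by simp
    finally have "v * (f b - c) = 0" .
    then have "v = 0" using strict b by auto
    then show ?thesis using uv(3) z_eq by simp
  qed
  then show ?thesis using X hull_inc[of X S] by blast
qed

text \<open>Unit direction of the lines \<open>{along \<phi> = const}\<close>.\<close>
definition tangent :: "real \<Rightarrow> real^2" where
  "tangent \<phi> = vector [- sin \<phi>, cos \<phi>]"

lemma along_tangent: "along a (tangent b) = sin (a - b)"
  unfolding along_def tangent_def by (simp add: sin_diff algebra_simps)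

lemma norm_tangent: "norm (tangent \<phi>) = 1"
proof -
  have "tangent \<phi> \<bullet> tangent \<phi> = 1"
    unfolding tangent_def inner_vec_def sum_2 by (simp add: power2_eq_square[symmetric])
  then show ?thesis by (simp add: norm_eq_sqrt_inner)
qed

lemma inner_tangent: "tangent a \<bullet> tangent b = cos (a - b)"
  unfolding tangent_def inner_vec_def sum_2 by (simp add: cos_diff algebra_simps)

text \<open>Geometric content of the balance equation: if \<open>X\<close> lies on the \<open>a\<close>-line and \<open>Y\<close> on the
  \<open>b\<close>-line, then \<open>X\<close> lies as high above the \<open>b\<close>-line as \<open>Y\<close> above the \<open>a\<close>-line.\<close>
lemma balanced_gaps_equal:
  assumes "a - b = 2 * \<gamma>"
    and "(across a X + across b Y) * sin \<gamma> = (along a X - along b Y) * cos \<gamma>"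
  shows "along b X - along b Y = along a Y - along a X"
proof -
  have X: "along b X = cos (2 * \<gamma>) * along a X - sin (2 * \<gamma>) * across a X"
    using along_rotate[of a "- 2 * \<gamma>" X] assms(1) by (simp add: algebra_simps)
  have Y: "along a Y = cos (2 * \<gamma>) * along b Y + sin (2 * \<gamma>) * across b Y"
    using along_rotate[of b "2 * \<gamma>" Y] assms(1) by (simp add: algebra_simps)
  have "sin (2 * \<gamma>) * (across a X + across b Y) = 2 * cos \<gamma> * ((across a X + across b Y) * sin \<gamma>)"
    unfolding sin_double by (simp add: algebra_simps)
  also have "\<dots> = (1 + cos (2 * \<gamma>)) * (along a X - along b Y)"
    using assms(2) by (simp add: cos_double_cos power2_eq_square)
  finally show ?thesis using X Y by (simp add: algebra_simps)
qed

lemma balanced_contact_points: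
  assumes S: "compact S" "S \<noteq> {}" and "a - b = 2 * \<gamma>" "sin \<gamma> \<noteq> 0"
    and balance: "\<And>p q. p \<in> S \<Longrightarrow> q \<in> S \<Longrightarrow>
      along a p = min_along S a \<Longrightarrow> along b q = min_along S b \<Longrightarrow>
      (across a p + across b q) * sin \<gamma> = (min_along S a - min_along S b) * cos \<gamma>"
  obtains X Y where "X \<in> S" "along a X = min_along S a" "Y \<in> S" "along b Y = min_along S b"
    "\<And>z. z \<in> S \<Longrightarrow> along a z = min_along S a \<Longrightarrow> z = X"
    "\<And>z. z \<in> S \<Longrightarrow> along b z = min_along S b \<Longrightarrow> z = Y"
    "along b X - min_along S b = along a Y - min_along S a"
proof -
  obtain X where X: "X \<in> S" "along a X = min_along S a" using min_along_attained[OF S] .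
  obtain Y where Y: "Y \<in> S" "along b Y = min_along S b" using min_along_attained[OF S] .
  show ?thesis
  proof (rule that[OF X Y])
    fix z assume z: "z \<in> S" "along a z = min_along S a"
    have "(across a z + across b Y) * sin \<gamma> = (across a X + across b Y) * sin \<gamma>"
      using balance[OF z(1) Y(1) z(2) Y(2)] balance[OF X(1) Y(1) X(2) Y(2)] by simp
    then show "z = X" using along_across_eqI[of a z X] z(2) X(2) \<open>sin \<gamma> \<noteq> 0\<close> by simp
  next
    fix z assume z: "z \<in> S" "along b z = min_along S b"
    have "(across a X + across b z) * sin \<gamma> = (across a X + across b Y) * sin \<gamma>"
      using balance[OF X(1) z(1) X(2) z(2)] balance[OF X(1) Y(1) X(2) Y(2)] by simp
    then show "z = Y" using along_across_eqI[of b z Y] z(2) Y(2) \<open>sin \<gamma> \<noteq> 0\<close> by simp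
  next
    show "along b X - min_along S b = along a Y - min_along S a"
      using balanced_gaps_equal[OF \<open>a - b = 2 * \<gamma>\<close>, of X Y] balance[OF X(1) Y(1) X(2) Y(2)] X(2) Y(2)
      by simp
  qed
qed

text \<open>Two supporting lines with unique touching points and equal gaps bound the required wedge:
  its apex is their intersection, and the equal gaps become equal distances from the apex.\<close>
lemma wedge_between_supporting_lines:
  fixes S :: "(real^2) set"
  assumes \<alpha>: "0 < \<alpha>" "\<alpha> < pi" and ab: "a - b = pi - \<alpha>"
    and X: "X \<in> S" "along a X = ma" and Y: "Y \<in> S" "along b Y = mb"
    and above_a: "\<And>z. z \<in> S \<Longrightarrow> ma \<le> along a z"
    and above_b: "\<And>z. z \<in> S \<Longrightarrow> mb \<le> along b z"
    and unique_X: "\<And>z. z \<in> S \<Longrightarrow> along a z = ma \<Longrightarrow> z = X"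
    and unique_Y: "\<And>z. z \<in> S \<Longrightarrow> along b z = mb \<Longrightarrow> z = Y"
    and gaps: "along b X - mb = along a Y - ma"
  shows "\<exists>P u v X Y. u \<noteq> 0 \<and> v \<noteq> 0 \<and> vec_angle u v = \<alpha> \<and>
           S \<subseteq> wedge P u v \<and>
           ray P u \<inter> convex hull S = {X} \<and>
           ray P v \<inter> convex hull S = {Y} \<and>
           X \<in> S \<and> Y \<in> S \<and> dist P X = dist P Y"
proof -
  define \<sigma> where "\<sigma> = sin (a - b)"
  have \<sigma>: "0 < \<sigma>" using \<alpha> ab by (simp add: \<sigma>_def sin_gt_zero)
  define u v where "u = - tangent a" and "v = tangent b"
  have along_uv: "along a u = 0" "along b u = \<sigma>" "along a v = \<sigma>" "along b v = 0"
    using along_tangent[of a a] along_tangent[of b a] along_tangent[of a b] along_tangent[of b b]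
    by (simp_all add: u_def v_def \<sigma>_def linear_neg[OF linear_along] sin_diff)
  define t where "t = (along b X - mb) / \<sigma>"
  have t: "0 \<le> t" using above_b[OF X(1)] \<sigma> by (simp add: t_def)
  define P where "P = X - t *\<^sub>R u"
  have P: "along a P = ma" "along b P = mb"
    using X(2) along_uv \<sigma> by (simp_all add: P_def t_def along_diff along_scale)
  have coords: "z = P + ((along b z - mb) / \<sigma>) *\<^sub>R u + ((along a z - ma) / \<sigma>) *\<^sub>R v" for z
    by (rule along_pair_eqI[of a b]) (use \<sigma> P along_uv in \<open>simp_all add: \<sigma>_def along_add along_scale\<close>)
  have X_ray: "X = P + t *\<^sub>R u" by (simp add: P_def)
  have Y_ray: "Y = P + t *\<^sub>R v" using coords[of Y] Y(2) gaps by (simp add: t_def)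
  have exposed_X: "{z \<in> convex hull S. along a z = ma} = {X}"
    by (rule convex_hull_exposed_point[OF linear_along above_a X unique_X])
  have exposed_Y: "{z \<in> convex hull S. along b z = mb} = {Y}"
    by (rule convex_hull_exposed_point[OF linear_along above_b Y unique_Y])
  have norms: "norm u = 1" "norm v = 1" by (simp_all add: u_def v_def norm_tangent)
  show ?thesis
  proof (intro exI conjI)
    show "u \<noteq> 0" "v \<noteq> 0" using norms by auto
    have "u \<bullet> v = cos \<alpha>" using ab by (simp add: u_def v_def inner_tangent)
    then show "vec_angle u v = \<alpha>" using norms \<alpha> by (simp add: vec_angle_def arccos_cos)
    show "S \<subseteq> wedge P u v"
    proof
      fix z assume "z \<in> S"
      then have "0 \<le> (along b z - mb) / \<sigma>" "0 \<le> (along a z - ma) / \<sigma>"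
        using above_a above_b \<sigma> by simp_all
      then show "z \<in> wedge P u v" unfolding wedge_def using coords[of z] by blast
    qed
    have "ray P u \<subseteq> {z. along a z = ma}" "ray P v \<subseteq> {z. along b z = mb}"
      using P along_uv by (auto simp: ray_def along_add along_scale)
    moreover have "X \<in> ray P u" "Y \<in> ray P v" using X_ray Y_ray t by (auto simp: ray_def)
    ultimately show "ray P u \<inter> convex hull S = {X}" "ray P v \<inter> convex hull S = {Y}"
      using exposed_X exposed_Y X(1) Y(1) hull_inc[of _ S] by blast+
    show "X \<in> S" "Y \<in> S" by fact+
    show "dist P X = dist P Y" using X_ray Y_ray norms by (simp add: dist_norm)
  qed
qed

theorem mainTheorem4:
  fixes S :: "(real^2) set" and \<alpha> :: real
  assumes "compact S" and "S \<noteq> {}" and "0 < \<alpha>" and "\<alpha> < pi"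
  shows "\<exists>P u v X Y. u \<noteq> 0 \<and> v \<noteq> 0 \<and> vec_angle u v = \<alpha> \<and>
           S \<subseteq> wedge P u v \<and>
           ray P u \<inter> convex hull S = {X} \<and>
           ray P v \<inter> convex hull S = {Y} \<and>
           X \<in> S \<and> Y \<in> S \<and> dist P X = dist P Y"
proof -
  define \<gamma> where "\<gamma> = (pi - \<alpha>) / 2"
  have \<gamma>: "0 < \<gamma>" "\<gamma> < pi / 2" using assms(3,4) by (simp_all add: \<gamma>_def)
  then have "sin \<gamma> \<noteq> 0" using sin_gt_zero[of \<gamma>] by simp
  obtain a b where ab: "a - b = 2 * \<gamma>" and balance: "\<And>p q. p \<in> S \<Longrightarrow> q \<in> S \<Longrightarrow>
      along a p = min_along S a \<Longrightarrow> along b q = min_along S b \<Longrightarrow>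
      (across a p + across b q) * sin \<gamma> = (min_along S a - min_along S b) * cos \<gamma>"
    using balancing_direction[OF assms(1,2) \<gamma>] by blast
  obtain X Y where X: "X \<in> S" "along a X = min_along S a" and Y: "Y \<in> S" "along b Y = min_along S b"
    and unique: "\<And>z. z \<in> S \<Longrightarrow> along a z = min_along S a \<Longrightarrow> z = X"
      "\<And>z. z \<in> S \<Longrightarrow> along b z = min_along S b \<Longrightarrow> z = Y"
    and gaps: "along b X - min_along S b = along a Y - min_along S a"
    using balanced_contact_points[OF assms(1,2) ab \<open>sin \<gamma> \<noteq> 0\<close> balance] by blast
  have "a - b = pi - \<alpha>" using ab by (simp add: \<gamma>_def)
  from wedge_between_supporting_lines[OF assms(3,4) this X Y _ _ unique gaps]
  show ?thesis using min_along_le[OF assms(1)] by blast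
qed

end
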